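(* Let $\Sigma$ be a graded alphabet and $L$ a finite tree language over $\Sigma$. Then the RWTA $A_L$ is a sequential RWTA that realizes $\mathrm{SubTreeSeries}_L$, i.e. $\mathbb{P}_{A_L}=\mathrm{SubTreeSeries}_L$.
   Context: A graded alphabet is a finite set $\Sigma=\bigcup_{k\in\mathbb{N}}\Sigma_k$; $T_\Sigma$ is the set of trees $f(t_1,\ldots,t_k)$ with $f\in\Sigma_k$. A RWTA (weights in $(\mathbb{N},+)$) is $A=(\Sigma,Q,\nu,\delta)$ with $Q$ finite, $\nu:Q\to\mathbb{N}$, $\delta\subseteq\bigcup_k Q\times\Sigma_k\times Q^k$; $\delta(f,q_1,\ldots,q_k)=\{q\mid(q,f,q_1,\ldots,q_k)\in\delta\}$, extended to subsets by union over tuples; $\nu(S)=\sum_{s\in S}\nu(s)$ ($\nu(\emptyset)=0$); $\Delta(f(t_1,\ldots,t_k))=\delta(f,\Delta(t_1),\ldots,\Delta(t_k))$; $\mathbb{P}_A(t)=\nu(\Delta(t))$; $A$ is sequential if $\mathrm{Card}(\Delta(t))\le1$ for all $t$. For $t=f(t_1,\ldots,t_k)$, $\mathrm{SubTree}(t)=\{t\}\cup\bigcup_j\mathrm{SubTree}(t_j)$; $\mathrm{SubTreeSet}(L)=\bigcup_{t\in L}\mathrm{SubTree}(t)$; $\mathrm{SubTreeSeries}_t(s)$ is the number of nodes of $t$ whose subtree equals $s$, and $\mathrm{SubTreeSeries}_L=\sum_{t\in L}\mathrm{SubTreeSeries}_t$. The sequential subtree automaton of $L$ is $A_L=(\Sigma,\mathrm{SubTreeSet}(L),\nu,\delta)$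 with $\nu(t')=\mathrm{SubTreeSeries}_L(t')$ and, for $f\in\Sigma_k$, $t_{k+1}\in\delta(f,t_1,\ldots,t_k)$ iff $t_{k+1}=f(t_1,\ldots,t_k)$. *)

theory Defs
  imports Main
begin

text \<open>Ranked trees. A graded alphabet is a finite set of ranked symbols (f, k),
  i.e. Sigma_k = {f. (f,k) \<in> Sigma}.\<close>

datatype 'f tree = Node 'f "'f tree list"

type_synonym 'f graded_alphabet = "('f \<times> nat) set"

definition graded_alphabet :: "'f graded_alphabet \<Rightarrow> bool" where
  "graded_alphabet \<Sigma> \<longleftrightarrow> finite \<Sigma>"

inductive_set trees :: "'f graded_alphabet \<Rightarrow> 'f tree set" for \<Sigma> where
  "(f, length ts) \<in> \<Sigma> \<Longrightarrow> (\<forall>t\<in>set ts. t \<in> trees \<Sigma>) \<Longrightarrow> Node f ts \<in> trees \<Sigma>"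

record ('f, 'q) rwta =
  states :: "'q set"
  weight :: "'q \<Rightarrow> nat"
  trans :: "('q \<times> 'f \<times> 'q list) set"

definition is_rwta :: "'f graded_alphabet \<Rightarrow> ('f, 'q) rwta \<Rightarrow> bool" where
  "is_rwta \<Sigma> A \<longleftrightarrow> finite (states A) \<and>
     (\<forall>(q, f, qs) \<in> trans A. q \<in> states A \<and> (f, length qs) \<in> \<Sigma> \<and> set qs \<subseteq> states A)"

definition delta_set :: "('q \<times> 'f \<times> 'q list) set \<Rightarrow> 'f \<Rightarrow> 'q set list \<Rightarrow> 'q set" where
  "delta_set \<delta> f Ss = {q. \<exists>qs. list_all2 (\<in>) qs Ss \<and> (q, f, qs) \<in> \<delta>}"

fun Delta :: "('q \<times> 'f \<times> 'q list) set \<Rightarrow> 'f tree \<Rightarrow> 'q set" where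
  "Delta \<delta> (Node f ts) = delta_set \<delta> f (map (Delta \<delta>) ts)"

definition realized :: "('f, 'q) rwta \<Rightarrow> 'f tree \<Rightarrow> nat" where
  "realized A t = (\<Sum>q \<in> Delta (trans A) t. weight A q)"

definition sequential :: "'f graded_alphabet \<Rightarrow> ('f, 'q) rwta \<Rightarrow> bool" where
  "sequential \<Sigma> A \<longleftrightarrow> (\<forall>t \<in> trees \<Sigma>. card (Delta (trans A) t) \<le> 1)"

fun SubTree :: "'f tree \<Rightarrow> 'f tree set" where
  "SubTree (Node f ts) = insert (Node f ts) (\<Union>t \<in> set ts. SubTree t)"

definition SubTreeSet :: "'f tree set \<Rightarrow> 'f tree set" where
  "SubTreeSet L = (\<Union>t \<in> L. SubTree t)"

fun SubTreeSeries_t :: "'f tree \<Rightarrow> 'f tree \<Rightarrow> nat" where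
  "SubTreeSeries_t (Node f ts) s =
     (if Node f ts = s then 1 else 0) + sum_list (map (\<lambda>c. SubTreeSeries_t c s) ts)"

definition SubTreeSeries :: "'f tree set \<Rightarrow> 'f tree \<Rightarrow> nat" where
  "SubTreeSeries L s = (\<Sum>t \<in> L. SubTreeSeries_t t s)"

definition subtree_automaton :: "'f graded_alphabet \<Rightarrow> 'f tree set \<Rightarrow> ('f, 'f tree) rwta" where
  "subtree_automaton \<Sigma> L =
     \<lparr> states = SubTreeSet L,
       weight = SubTreeSeries L,
       trans = {(q, f, qs). q \<in> SubTreeSet L \<and> set qs \<subseteq> SubTreeSet L \<and>
                            (f, length qs) \<in> \<Sigma> \<and> q = Node f qs} \<rparr>"

end

theory Submission
  imports Defs
begin

text \<open>A transition of the subtree automaton just rebuilds the tree it reads, so by induction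
  the only state reachable on t is t itself, and it is reached iff t is a subtree of L over the
  alphabet. Hence the automaton is sequential and its weight at t is the weight of the state t,
  i.e. the number of occurrences of t in L (zero when t is not a subtree of L).\<close>

lemma SubTree_self: "t \<in> SubTree t"
  by (cases t) simp

lemma SubTree_trans: "s \<in> SubTree t \<Longrightarrow> SubTree s \<subseteq> SubTree t"
  by (induction t) auto

lemma SubTreeSet_children:
  assumes "Node f ts \<in> SubTreeSet L"
  shows "set ts \<subseteq> SubTreeSet L"
proof -
  obtain u where u: "u \<in> L" "Node f ts \<in> SubTree u"
    using assms unfolding SubTreeSet_def by blast
  have "set ts \<subseteq> SubTree (Node f ts)"
    using SubTree_self by fastforce
  also have "\<dots> \<subseteq> SubTree u"
    using SubTree_trans[OF u(2)] .
  finally show ?thesis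
    using u(1) unfolding SubTreeSet_def by blast
qed

lemma finite_SubTree: "finite (SubTree t)"
  by (induction t) auto

lemma finite_SubTreeSet: "finite L \<Longrightarrow> finite (SubTreeSet L)"
  unfolding SubTreeSet_def by (simp add: finite_SubTree)

lemma SubTreeSeries_t_eq_0: "s \<notin> SubTree t \<Longrightarrow> SubTreeSeries_t t s = 0"
  by (induction t) (auto simp: sum_list_eq_0_iff)

lemma SubTreeSeries_eq_0: "s \<notin> SubTreeSet L \<Longrightarrow> SubTreeSeries L s = 0"
  unfolding SubTreeSeries_def SubTreeSet_def by (simp add: SubTreeSeries_t_eq_0)

lemma Node_in_trees_iff:
  "Node f ts \<in> trees \<Sigma> \<longleftrightarrow> (f, length ts) \<in> \<Sigma> \<and> set ts \<subseteq> trees \<Sigma>"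
  by (auto elim: trees.cases intro: trees.intros)

lemma list_all2_mem_singletons:
  "list_all2 (\<in>) qs (map (\<lambda>t. {t} \<inter> A) ts) \<longleftrightarrow> qs = ts \<and> set ts \<subseteq> A"
  by (induction ts arbitrary: qs) (auto simp: list_all2_Cons2)

lemma Delta_subtree_automaton:
  "Delta (trans (subtree_automaton \<Sigma> L)) t = {t} \<inter> (SubTreeSet L \<inter> trees \<Sigma>)"
proof (induction t)
  case (Node f ts)
  let ?B = "SubTreeSet L \<inter> trees \<Sigma>"
  have children: "map (Delta (trans (subtree_automaton \<Sigma> L))) ts = map (\<lambda>t. {t} \<inter> ?B) ts"
    using Node.IH by simp
  have "Delta (trans (subtree_automaton \<Sigma> L)) (Node f ts)
      = {q. Node f ts \<in> SubTreeSet L \<and> set ts \<subseteq> ?B \<and> (f, length ts) \<in> \<Sigma> \<and> q = Node f ts}"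
    unfolding Delta.simps children delta_set_def list_all2_mem_singletons
    by (auto simp: subtree_automaton_def)
  also have "\<dots> = {Node f ts} \<inter> ?B"
    using SubTreeSet_children[of f ts L] by (auto simp: Node_in_trees_iff)
  finally show ?case .
qed

lemma weight_subtree_automaton: "weight (subtree_automaton \<Sigma> L) = SubTreeSeries L"
  by (simp add: subtree_automaton_def)

theorem corollary7:
  fixes \<Sigma> :: "'f graded_alphabet" and L :: "'f tree set"
  assumes "graded_alphabet \<Sigma>" and "finite L" and "L \<subseteq> trees \<Sigma>"
  shows "is_rwta \<Sigma> (subtree_automaton \<Sigma> L) \<and> sequential \<Sigma> (subtree_automaton \<Sigma> L) \<and>
         (\<forall>t \<in> trees \<Sigma>. realized (subtree_automaton \<Sigma> L) t = SubTreeSeries L t)"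
proof (intro conjI ballI)
  show "is_rwta \<Sigma> (subtree_automaton \<Sigma> L)"
    using finite_SubTreeSet[OF assms(2)] by (auto simp: is_rwta_def subtree_automaton_def)
  show "sequential \<Sigma> (subtree_automaton \<Sigma> L)"
    by (simp add: sequential_def Delta_subtree_automaton card_le_Suc0_iff_eq)
  fix t assume "t \<in> trees \<Sigma>"
  then show "realized (subtree_automaton \<Sigma> L) t = SubTreeSeries L t"
    by (auto simp: realized_def Delta_subtree_automaton weight_subtree_automaton
        Int_insert_left SubTreeSeries_eq_0)
qed

end
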